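(* Let $N\ge 2$, $1\le m\le N$ and $1\le k\le N$ be integers. Consider a uniformly random ranking of $N$ items exactly $m$ of which are relevant, i.e. the set of positions occupied by the relevant items is a uniformly random $m$-element subset of $\{1,\dots,N\}$. For $j=1,\dots,N$ let $I_j\in\{0,1\}$ equal $1$ iff the item at position $j$ is relevant, let $P@i=\frac1i\sum_{j=1}^i I_j$, and let $$AP@k=\frac{1}{\min(m,k)}\sum_{i=1}^k P@i\cdot I_i .$$ Then $$\operatorname{E}(AP@k)=\frac{m}{N\cdot\min(k,m)}\left(\frac{m-1}{N-1}\,k+\frac{N-m}{N-1}\,H_k\right),$$ where $H_k=\sum_{i=1}^k\frac1i$.
   Context: This expectation is called $MAP_{WOR}@k$ in the paper (offline evaluation, sampling without replacement). $H_k$ is the $k$-th harmonic number. *)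

theory Defs
  imports "HOL-Probability.Probability" "HOL-Analysis.Harmonic_Numbers"
begin

text \<open>A ranking is represented by the set S of positions (in {1..N}) occupied by relevant items.\<close>

definition rel_ind :: "nat set \<Rightarrow> nat \<Rightarrow> real" where
  "rel_ind S j = (if j \<in> S then 1 else 0)"

definition prec_at :: "nat set \<Rightarrow> nat \<Rightarrow> real" where
  "prec_at S i = (1 / real i) * (\<Sum>j=1..i. rel_ind S j)"

definition avg_prec_at :: "nat \<Rightarrow> nat set \<Rightarrow> nat \<Rightarrow> real" where
  "avg_prec_at m S k = (1 / real (min m k)) * (\<Sum>i=1..k. prec_at S i * rel_ind S i)"

definition random_ranking :: "nat \<Rightarrow> nat \<Rightarrow> nat set pmf" where
  "random_ranking N m = pmf_of_set {S. S \<subseteq> {1..N} \<and> card S = m}"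

end

theory Submission
  imports Defs
begin

text \<open>AP@k is bilinear in the relevance indicators, so its expectation only involves the
  probability m/N that a given position is relevant and the probability m(m-1)/(N(N-1)) that two
  given positions are. Hence E(P@i * I_i) = (m/N + (i-1) m(m-1)/(N(N-1)))/i, whose sum over
  i = 1..k splits into a part constant in i (the term linear in k) and a part proportional to
  1/i (the harmonic number).\<close>

lemma card_subsets_of_card_containing:
  assumes "finite A" "D \<subseteq> A" "card D \<le> m"
  shows "card {S. S \<subseteq> A \<and> card S = m \<and> D \<subseteq> S} = (card A - card D) choose (m - card D)"
proof -
  have "finite D" using assms finite_subset by blast
  have "bij_betw (\<lambda>T. T \<union> D) {T. T \<subseteq> A - D \<and> card T = m - card D}
      {S. S \<subseteq> A \<and> card S = m \<and> D \<subseteq> S}"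
  proof (rule bij_betw_byWitness[where f'="\<lambda>S. S - D"])
    show "(\<lambda>T. T \<union> D) ` {T. T \<subseteq> A - D \<and> card T = m - card D}
        \<subseteq> {S. S \<subseteq> A \<and> card S = m \<and> D \<subseteq> S}"
    proof (rule image_subsetI)
      fix T assume T: "T \<in> {T. T \<subseteq> A - D \<and> card T = m - card D}"
      then have "finite T" using assms finite_subset by blast
      with T \<open>finite D\<close> have "card (T \<union> D) = card T + card D"
        by (subst card_Un_disjoint) auto
      with T assms show "T \<union> D \<in> {S. S \<subseteq> A \<and> card S = m \<and> D \<subseteq> S}" by auto
    qed
    show "(\<lambda>S. S - D) ` {S. S \<subseteq> A \<and> card S = m \<and> D \<subseteq> S}
        \<subseteq> {T. T \<subseteq> A - D \<and> card T = m - card D}"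
      using \<open>finite D\<close> by (auto simp: card_Diff_subset)
  qed auto
  then have "card {S. S \<subseteq> A \<and> card S = m \<and> D \<subseteq> S} = card {T. T \<subseteq> A - D \<and> card T = m - card D}"
    by (simp add: bij_betw_same_card)
  also have "\<dots> = (card A - card D) choose (m - card D)"
    using assms \<open>finite D\<close> by (simp add: n_subsets card_Diff_subset)
  finally show ?thesis .
qed

lemma binomial_two_absorption:
  assumes "2 \<le> m"
  shows "n * (n - 1) * ((n - 2) choose (m - 2)) = m * (m - 1) * (n choose m)"
proof -
  obtain l where m: "m = Suc (Suc l)" using assms by (metis add_2_eq_Suc le_Suc_ex)
  have inner: "(n - 1) * ((n - 2) choose l) = Suc l * ((n - 1) choose Suc l)"
    by (metis binomial_absorption diff_diff_left one_add_one)
  have outer: "n * ((n - 1) choose Suc l) = Suc (Suc l) * (n choose Suc (Suc l))"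
    using binomial_absorption[of "Suc l" n] by simp
  have "n * (n - 1) * ((n - 2) choose l) = Suc l * (n * ((n - 1) choose Suc l))"
    by (simp only: mult.assoc inner mult.left_commute[of n])
  also have "\<dots> = m * (m - 1) * (n choose m)"
    by (simp only: outer m diff_Suc_1 mult.commute mult.left_commute)
  finally show ?thesis by (simp add: m)
qed

lemma sum_affine_div_eq_harm:
  fixes a b :: real
  shows "(\<Sum>i=1..k. (a + (real i - 1) * b) / real i) = real k * b + (a - b) * harm k"
proof -
  have "(\<Sum>i=1..k. (a + (real i - 1) * b) / real i) = (\<Sum>i=1..k. b + (a - b) * inverse (real i))"
    by (intro sum.cong) (auto simp: field_simps)
  then show ?thesis by (simp add: sum.distrib harm_def sum_distrib_left)
qed

lemma rel_ind_mult_rel_ind: "rel_ind S j * rel_ind S i = indicator {S. j \<in> S \<and> i \<in> S} S"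
  by (simp add: rel_ind_def indicator_def)

lemma expectation_avg_prec_at:
  fixes p :: "nat set pmf"
  shows "measure_pmf.expectation p (\<lambda>S. avg_prec_at m S k)
    = (\<Sum>i=1..k. (\<Sum>j=1..i. measure_pmf.prob p {S. j \<in> S \<and> i \<in> S}) / real i) / real (min m k)"
proof -
  have "avg_prec_at m S k
      = (\<Sum>i=1..k. (\<Sum>j=1..i. indicator {S. j \<in> S \<and> i \<in> S} S) / real i) / real (min m k)" for S
    unfolding avg_prec_at_def prec_at_def
    by (simp add: sum_distrib_right rel_ind_mult_rel_ind[symmetric])
  then show ?thesis
    by (simp add: integral_sum measure_pmf.integrable_const_bound[where B=1])
qed

lemma prob_random_ranking:
  assumes "m \<le> N"
  shows "measure_pmf.prob (random_ranking N m) A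
    = real (card {S \<in> A. S \<subseteq> {1..N} \<and> card S = m}) / real (N choose m)"
proof -
  let ?U = "{S. S \<subseteq> {1..N} \<and> card S = m}"
  have "finite ?U" by (rule finite_subset[of _ "Pow {1..N}"]) auto
  moreover have "card ?U = N choose m" by (simp add: n_subsets)
  moreover from this assms have "?U \<noteq> {}"
    by (metis card.empty zero_less_binomial_iff less_irrefl)
  moreover have "?U \<inter> A = {S \<in> A. S \<subseteq> {1..N} \<and> card S = m}" by blast
  ultimately show ?thesis unfolding random_ranking_def by (simp add: measure_pmf_of_set)
qed

lemma prob_superset_random_ranking:
  assumes "D \<subseteq> {1..N}" "card D \<le> m" "m \<le> N"
  shows "measure_pmf.prob (random_ranking N m) {S. D \<subseteq> S}
    = real ((N - card D) choose (m - card D)) / real (N choose m)"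
proof -
  have "{S \<in> {S. D \<subseteq> S}. S \<subseteq> {1..N} \<and> card S = m} = {S. S \<subseteq> {1..N} \<and> card S = m \<and> D \<subseteq> S}"
    by blast
  then show ?thesis
    using assms by (simp add: prob_random_ranking card_subsets_of_card_containing)
qed

lemma prob_mem_random_ranking:
  assumes "i \<in> {1..N}" "1 \<le> m" "m \<le> N"
  shows "measure_pmf.prob (random_ranking N m) {S. i \<in> S} = real m / real N"
proof -
  have "card {i} = 1" "{S. {i} \<subseteq> S} = {S. i \<in> S}" by auto
  then have "measure_pmf.prob (random_ranking N m) {S. i \<in> S}
      = real ((N - 1) choose (m - 1)) / real (N choose m)"
    using prob_superset_random_ranking[of "{i}" N m] assms by simp
  also have "\<dots> = real m / real N"
  proof -
    have "real ((N - 1) choose (m - 1)) * real N = real m * real (N choose m)"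
      using binomial_absorption[of "m - 1" N] assms by (simp flip: of_nat_mult)
    moreover have "N choose m > 0" "N > 0" using assms by auto
    ultimately show ?thesis by (simp add: frac_eq_eq)
  qed
  finally show ?thesis .
qed

lemma prob_pair_mem_random_ranking:
  assumes "i \<in> {1..N}" "j \<in> {1..N}" "i \<noteq> j" "m \<le> N"
  shows "measure_pmf.prob (random_ranking N m) {S. i \<in> S \<and> j \<in> S}
    = real m * (real m - 1) / (real N * (real N - 1))"
proof (cases "2 \<le> m")
  case True
  have card_ij: "card {i, j} = 2" and superset_ij: "{S. {i, j} \<subseteq> S} = {S. i \<in> S \<and> j \<in> S}"
    using assms by auto
  have "measure_pmf.prob (random_ranking N m) {S. {i, j} \<subseteq> S}
      = real ((N - card {i, j}) choose (m - card {i, j})) / real (N choose m)"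
  proof (rule prob_superset_random_ranking)
    show "{i, j} \<subseteq> {1..N}" "card {i, j} \<le> m" "m \<le> N" using assms True by auto
  qed
  then have "measure_pmf.prob (random_ranking N m) {S. i \<in> S \<and> j \<in> S}
      = real ((N - 2) choose (m - 2)) / real (N choose m)"
    unfolding card_ij superset_ij .
  also have "\<dots> = real m * (real m - 1) / (real N * (real N - 1))"
  proof -
    have "real (N - 1) = real N - 1" "real (m - 1) = real m - 1" using True assms by auto
    with arg_cong[where f=real, OF binomial_two_absorption[OF True, of N]]
    have "real ((N - 2) choose (m - 2)) * (real N * (real N - 1)) = real m * (real m - 1) * real (N choose m)"
      by (simp only: of_nat_mult mult.commute mult.left_commute)
    moreover have "N choose m > 0" "real N * (real N - 1) \<noteq> 0" using True assms by auto
    ultimately show ?thesis by (simp add: frac_eq_eq)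
  qed
  finally show ?thesis .
next
  case False
  have no_pair: "{S \<in> {S. i \<in> S \<and> j \<in> S}. S \<subseteq> {1..N} \<and> card S = m} = {}"
  proof (intro equals0I)
    fix S assume S: "S \<in> {S \<in> {S. i \<in> S \<and> j \<in> S}. S \<subseteq> {1..N} \<and> card S = m}"
    then have "card {i, j} \<le> card S" by (intro card_mono) (auto intro: finite_subset)
    with S False \<open>i \<noteq> j\<close> show False by simp
  qed
  have "measure_pmf.prob (random_ranking N m) {S. i \<in> S \<and> j \<in> S} = 0"
    using prob_random_ranking[OF \<open>m \<le> N\<close>, of "{S. i \<in> S \<and> j \<in> S}"] unfolding no_pair by simp
  moreover have "real m * (real m - 1) = 0" using False by (cases m) auto
  ultimately show ?thesis by simp
qed

lemma sum_prob_pair_mem_random_ranking: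
  assumes "i \<in> {1..N}" "1 \<le> m" "m \<le> N"
  shows "(\<Sum>j=1..i. measure_pmf.prob (random_ranking N m) {S. j \<in> S \<and> i \<in> S})
    = real m / real N + (real i - 1) * (real m * (real m - 1) / (real N * (real N - 1)))"
proof -
  have "{1..i} = insert i {1..<i}" using assms by auto
  then have "(\<Sum>j=1..i. measure_pmf.prob (random_ranking N m) {S. j \<in> S \<and> i \<in> S})
      = measure_pmf.prob (random_ranking N m) {S. i \<in> S}
        + (\<Sum>j=1..<i. measure_pmf.prob (random_ranking N m) {S. j \<in> S \<and> i \<in> S})"
    by simp
  also have "(\<Sum>j=1..<i. measure_pmf.prob (random_ranking N m) {S. j \<in> S \<and> i \<in> S})
      = (\<Sum>j=1..<i. real m * (real m - 1) / (real N * (real N - 1)))"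
    using assms by (intro sum.cong) (auto simp: prob_pair_mem_random_ranking)
  finally show ?thesis
    using assms by (simp add: prob_mem_random_ranking of_nat_diff)
qed

theorem theorem1:
  fixes N m k :: nat
  assumes "N \<ge> 2" and "1 \<le> m" and "m \<le> N" and "1 \<le> k" and "k \<le> N"
  shows "measure_pmf.expectation (random_ranking N m) (\<lambda>S. avg_prec_at m S k)
    = real m / (real N * real (min k m)) *
      ((real m - 1) / (real N - 1) * real k + (real N - real m) / (real N - 1) * (harm k :: real))"
proof -
  define a where "a = real m / real N"
  define r where "r = (real m - 1) / (real N - 1)"
  have complement: "(real N - real m) / (real N - 1) = 1 - r"
    using assms by (simp add: r_def field_simps)
  have row: "(\<Sum>j=1..i. measure_pmf.prob (random_ranking N m) {S. j \<in> S \<and> i \<in> S})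
      = a + (real i - 1) * (a * r)" if "i \<in> {1..k}" for i
  proof -
    have "i \<in> {1..N}" using that assms by auto
    from sum_prob_pair_mem_random_ranking[OF this \<open>1 \<le> m\<close> \<open>m \<le> N\<close>] show ?thesis
      by (simp add: a_def r_def)
  qed
  have "measure_pmf.expectation (random_ranking N m) (\<lambda>S. avg_prec_at m S k)
      = (\<Sum>i=1..k. (a + (real i - 1) * (a * r)) / real i) / real (min m k)"
    unfolding expectation_avg_prec_at by (intro arg_cong[where f="\<lambda>x. x / _"] sum.cong) (simp_all only: row)
  also have "\<dots> = (real k * (a * r) + (a - a * r) * harm k) / real (min m k)"
    by (simp only: sum_affine_div_eq_harm)
  also have "\<dots> = a * (r * real k + (1 - r) * harm k) / real (min m k)"
    by (simp add: algebra_simps)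
  finally show ?thesis
    unfolding complement by (simp add: a_def r_def min.commute)
qed

end
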